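(* Every (fork, dart)-free graph $G$ satisfies $\chi(G)\le \omega(G)^2$.
   Context: All graphs are finite and simple; $\chi$ is chromatic number, $\omega$ clique number. The fork is obtained from $K_{1,3}$ by subdividing one edge once. The dart is the graph on $v_1,\dots,v_5$ where $v_1$ is adjacent to $v_2,v_3,v_4$, the set $\{v_2,v_3,v_4\}$ is stable, and $v_5$ is adjacent to $v_1,v_3,v_4$ but not to $v_2$. $G$ is $(H_1,H_2)$-free if it has no induced subgraph isomorphic to $H_1$ or $H_2$. *)

theory Defs
  imports Main
begin

definition simple_graph :: "'a set \<Rightarrow> ('a \<Rightarrow> 'a \<Rightarrow> bool) \<Rightarrow> bool" where
  "simple_graph V E \<longleftrightarrow> finite V \<and> (\<forall>x y. E x y \<longrightarrow> E y x) \<and> (\<forall>x. \<not> E x x)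
     \<and> (\<forall>x y. E x y \<longrightarrow> x \<in> V \<and> y \<in> V)"

definition has_induced :: "'a set \<Rightarrow> ('a \<Rightarrow> 'a \<Rightarrow> bool) \<Rightarrow> nat \<Rightarrow> (nat \<Rightarrow> nat \<Rightarrow> bool) \<Rightarrow> bool" where
  "has_induced V E n F \<longleftrightarrow> (\<exists>f. inj_on f {0..<n} \<and> f ` {0..<n} \<subseteq> V \<and>
     (\<forall>i\<in>{0..<n}. \<forall>j\<in>{0..<n}. E (f i) (f j) \<longleftrightarrow> F i j))"

text \<open>Fork: K_{1,3} (centre 0, leaves 1,2,3) with edge 0--3 subdivided by 4.\<close>
definition fork_edge :: "nat \<Rightarrow> nat \<Rightarrow> bool" where
  "fork_edge i j \<longleftrightarrow> {i, j} \<in> {{0,1}, {0,2}, {0,4}, {4,3}}"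

text \<open>Dart: v1..v5 renamed 0..4; v1 adjacent to v2,v3,v4; v5 adjacent to v1,v3,v4;
  {v2,v3,v4} stable; v5 not adjacent to v2.\<close>
definition dart_edge :: "nat \<Rightarrow> nat \<Rightarrow> bool" where
  "dart_edge i j \<longleftrightarrow> {i, j} \<in> {{0,1}, {0,2}, {0,3}, {4,0}, {4,2}, {4,3}}"

definition clique :: "'a set \<Rightarrow> ('a \<Rightarrow> 'a \<Rightarrow> bool) \<Rightarrow> 'a set \<Rightarrow> bool" where
  "clique V E K \<longleftrightarrow> K \<subseteq> V \<and> (\<forall>x\<in>K. \<forall>y\<in>K. x \<noteq> y \<longrightarrow> E x y)"

definition clique_number :: "'a set \<Rightarrow> ('a \<Rightarrow> 'a \<Rightarrow> bool) \<Rightarrow> nat" where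
  "clique_number V E = Max {card K | K. clique V E K}"

definition proper_colouring :: "'a set \<Rightarrow> ('a \<Rightarrow> 'a \<Rightarrow> bool) \<Rightarrow> nat \<Rightarrow> ('a \<Rightarrow> nat) \<Rightarrow> bool" where
  "proper_colouring V E k c \<longleftrightarrow> (\<forall>x\<in>V. c x < k) \<and> (\<forall>x\<in>V. \<forall>y\<in>V. E x y \<longrightarrow> c x \<noteq> c y)"

definition chromatic_number :: "'a set \<Rightarrow> ('a \<Rightarrow> 'a \<Rightarrow> bool) \<Rightarrow> nat" where
  "chromatic_number V E = (LEAST k. \<exists>c. proper_colouring V E k c)"

end

theory Submission
  imports Defs
begin

text \<open>Induction on the number of vertices of an induced subgraph X whose cliques have at most
  w vertices. Pick a vertex c. If its neighbourhood contains no stable triple, a Ramsey bound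
  gives c fewer than w^2 neighbours, and c can be added to a colouring of X - c. Otherwise fix a
  stable triple a1, a2, a3 of neighbours of c and consider the distance layers from c. The
  excluded fork and dart force every vertex at distance two to see two of a1, a2, a3. Hence the
  vertices at distance at least four have no neighbours elsewhere and are coloured separately. If
  there are none, X splits into the common neighbourhood of c and a1, whose cliques have at most
  w - 2 vertices, and three P3-free parts (disjoint unions of cliques) whose cliques have at most
  w - 1 vertices; this needs (w - 2)^2 + 3(w - 1) \<le> w^2 colours.\<close>

definition colourable :: "'a set \<Rightarrow> ('a \<Rightarrow> 'a \<Rightarrow> bool) \<Rightarrow> nat \<Rightarrow> bool" where
  "colourable X E k \<longleftrightarrow> (\<exists>f. proper_colouring X E k f)"

definition clique_bounded :: "'a set \<Rightarrow> ('a \<Rightarrow> 'a \<Rightarrow> bool) \<Rightarrow> nat \<Rightarrow> bool" where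
  "clique_bounded X E k \<longleftrightarrow> (\<forall>K. clique X E K \<longrightarrow> card K \<le> k)"

definition P3_free :: "'a set \<Rightarrow> ('a \<Rightarrow> 'a \<Rightarrow> bool) \<Rightarrow> bool" where
  "P3_free X E \<longleftrightarrow> (\<forall>x\<in>X. \<forall>y\<in>X. \<forall>z\<in>X. E x y \<longrightarrow> E y z \<longrightarrow> x \<noteq> z \<longrightarrow> E x z)"

lemma colourable_mono: "colourable X E k \<Longrightarrow> k \<le> k' \<Longrightarrow> colourable X E k'"
  unfolding colourable_def proper_colouring_def by (auto intro: order.strict_trans2)

lemma colourable_empty: "colourable {} E k"
  unfolding colourable_def proper_colouring_def by simp

lemma chromatic_number_le: "colourable V E k \<Longrightarrow> chromatic_number V E \<le> k"
  unfolding colourable_def chromatic_number_def by (rule Least_le)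

lemma colourable_card:
  assumes "finite X" "card X \<le> k" "irreflp E"
  shows "colourable X E k"
proof -
  obtain f :: "'a \<Rightarrow> nat" and n where f: "f ` X = {i. i < n}" "inj_on f X"
    using finite_imp_inj_to_nat_seg[OF assms(1)] by blast
  have "n = card X"
    using card_image[OF f(2)] f(1) by simp
  then have "f x < k" if "x \<in> X" for x
    using f(1) assms(2) that by (metis (mono_tags) imageI mem_Collect_eq order.strict_trans2)
  then have "proper_colouring X E k f"
    using f(2) assms(3) unfolding proper_colouring_def
    by (metis inj_onD irreflpD)
  then show ?thesis
    unfolding colourable_def by blast
qed

lemma colourable_Un:
  assumes "colourable X E k" "colourable Y E l"
  shows "colourable (X \<union> Y) E (k + l)"
proof -
  obtain f g where "proper_colouring X E k f" "proper_colouring Y E l g"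
    using assms unfolding colourable_def by blast
  then have "proper_colouring (X \<union> Y) E (k + l) (\<lambda>x. if x \<in> X then f x else k + g x)"
    unfolding proper_colouring_def
    by (intro conjI ballI impI; simp split: if_splits; fastforce)
  then show ?thesis
    unfolding colourable_def by blast
qed

lemma colourable_Un_anticomplete:
  assumes "colourable X E k" "colourable Y E k" "symp E" "\<forall>x\<in>X. \<forall>y\<in>Y. \<not> E x y"
  shows "colourable (X \<union> Y) E k"
proof -
  obtain f g where "proper_colouring X E k f" "proper_colouring Y E k g"
    using assms(1,2) unfolding colourable_def by blast
  then have "proper_colouring (X \<union> Y) E k (\<lambda>x. if x \<in> X then f x else g x)"
    using assms(3,4) unfolding proper_colouring_def by (auto dest: sympD)
  then show ?thesis
    unfolding colourable_def by blast
qed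

lemma colourable_insert_low_degree:
  assumes "finite X" "v \<in> X" "colourable (X - {v}) E k" "card {u\<in>X. E v u} < k"
    and "symp E" "irreflp E"
  shows "colourable X E k"
proof -
  obtain f where f: "proper_colouring (X - {v}) E k f"
    using assms(3) unfolding colourable_def by blast
  have "card (f ` {u\<in>X. E v u}) < card {..<k}"
    using assms(1,4) card_image_le[of "{u\<in>X. E v u}" f] by simp
  then have "\<not> {..<k} \<subseteq> f ` {u\<in>X. E v u}"
    using assms(1) card_mono[of "f ` {u\<in>X. E v u}" "{..<k}"] by auto
  then obtain a where a: "a < k" "a \<notin> f ` {u\<in>X. E v u}"
    by blast
  have "proper_colouring X E k (f(v := a))"
    unfolding proper_colouring_def
  proof (intro conjI ballI impI)
    fix x assume "x \<in> X"
    then show "(f(v := a)) x < k"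
      using f a(1) unfolding proper_colouring_def by simp
  next
    fix x y assume xy: "x \<in> X" "y \<in> X" "E x y"
    then have "x \<noteq> y"
      using assms(6) by (metis irreflpD)
    then show "(f(v := a)) x \<noteq> (f(v := a)) y"
      using xy f assms(5) a(2) unfolding proper_colouring_def
      by (cases "x = v"; cases "y = v") (auto dest: sympD)
  qed
  then show ?thesis
    unfolding colourable_def by blast
qed

lemma clique_subset: "clique Y E K \<Longrightarrow> Y \<subseteq> X \<Longrightarrow> clique X E K"
  unfolding clique_def by blast

lemma clique_insert:
  assumes "clique X E K" "v \<in> X" "\<forall>x\<in>K. E v x" "symp E"
  shows "clique X E (insert v K)"
  using assms unfolding clique_def by (auto dest: sympD)

lemma clique_bounded_subset: "clique_bounded X E k \<Longrightarrow> Y \<subseteq> X \<Longrightarrow> clique_bounded Y E k"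
  unfolding clique_bounded_def by (meson clique_subset)

lemma clique_bounded_clique_number:
  assumes "finite V"
  shows "clique_bounded V E (clique_number V E)"
proof -
  have "{card K | K. clique V E K} \<subseteq> card ` Pow V"
    unfolding clique_def by auto
  then have "finite {card K | K. clique V E K}"
    using assms finite_subset by blast
  then show ?thesis
    unfolding clique_bounded_def clique_number_def using Max_ge by blast
qed

lemma clique_bounded_common_neighbour:
  assumes "clique_bounded X E w" "finite X" "Y \<subseteq> X" "symp E"
    and "\<And>K. clique Y E K \<Longrightarrow> K \<noteq> {} \<Longrightarrow> \<exists>v\<in>X - K. \<forall>x\<in>K. E v x"
  shows "clique_bounded Y E (w - 1)"
  unfolding clique_bounded_def
proof (intro allI impI)
  fix K assume K: "clique Y E K"
  show "card K \<le> w - 1"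
  proof (cases "K = {}")
    case False
    then obtain v where v: "v \<in> X - K" "\<forall>x\<in>K. E v x"
      using assms(5) K by blast
    have "clique X E (insert v K)"
      using clique_insert[OF clique_subset[OF K assms(3)]] v assms(4) by blast
    then have "card (insert v K) \<le> w"
      using assms(1) unfolding clique_bounded_def by blast
    moreover have "K \<subseteq> X"
      using K assms(3) unfolding clique_def by blast
    then have "finite K"
      using assms(2) by (rule finite_subset)
    ultimately show ?thesis
      using v(1) by simp
  qed simp
qed

lemma clique_bounded_neighbourhood:
  assumes "clique_bounded X E w" "finite X" "v \<in> X" "Y \<subseteq> {x\<in>X. E v x}"
    and "symp E" "irreflp E"
  shows "clique_bounded Y E (w - 1)"
proof (rule clique_bounded_common_neighbour[OF assms(1,2) _ assms(5)])
  show "Y \<subseteq> X" using assms(4) by blast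
next
  fix K assume "clique Y E K"
  then have "K \<subseteq> {x\<in>X. E v x}"
    using assms(4) unfolding clique_def by blast
  then show "\<exists>u\<in>X - K. \<forall>x\<in>K. E u x"
    using assms(3,6) by (auto dest: irreflpD)
qed

lemma P3_free_subset: "P3_free X E \<Longrightarrow> Y \<subseteq> X \<Longrightarrow> P3_free Y E"
  unfolding P3_free_def by blast

text \<open>A closed neighbourhood in a P3-free graph is a clique with no edges leaving it, so it can be
  coloured apart from the rest.\<close>

lemma colourable_P3_free:
  assumes "finite X" "P3_free X E" "clique_bounded X E k" "symp E" "irreflp E"
  shows "colourable X E k"
  using assms
proof (induction "card X" arbitrary: X rule: less_induct)
  case less
  show ?case
  proof (cases "X = {}")
    case False
    then obtain v where v: "v \<in> X" by blast
    define C where "C = insert v {x\<in>X. E v x}"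
    have C_X: "C \<subseteq> X"
      using v unfolding C_def by blast
    have "clique X E C"
      unfolding clique_def
    proof (intro conjI C_X ballI impI)
      fix x y assume xy: "x \<in> C" "y \<in> C" "x \<noteq> y"
      show "E x y"
      proof (cases "x = v \<or> y = v")
        case True
        then show ?thesis
          using xy less.prems(4) unfolding C_def by (auto dest: sympD)
      next
        case False
        then have "E x v" "E v y" "x \<in> X" "y \<in> X"
          using xy less.prems(4) unfolding C_def by (auto dest: sympD)
        then show ?thesis
          using less.prems(2) v xy(3) unfolding P3_free_def by blast
      qed
    qed
    then have "card C \<le> k"
      using less.prems(3) unfolding clique_bounded_def by blast
    moreover have "finite C"
      using less.prems(1) C_X finite_subset by blast
    ultimately have col_C: "colourable C E k"
      using colourable_card less.prems(5) by blast
    have "X - C \<subset> X"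
      using v unfolding C_def by blast
    then have "card (X - C) < card X"
      by (rule psubset_card_mono[OF less.prems(1)])
    moreover have "P3_free (X - C) E"
      using P3_free_subset[OF less.prems(2)] by blast
    moreover have "clique_bounded (X - C) E k"
      using clique_bounded_subset[OF less.prems(3)] by blast
    ultimately have col_rest: "colourable (X - C) E k"
      using less.hyps less.prems(1,4,5) by blast
    have "\<not> E x y" if "x \<in> C" "y \<in> X - C" for x y
    proof
      assume "E x y"
      have "E v y"
      proof (cases "x = v")
        case False
        then have "E v x" "x \<in> X" "y \<in> X" "v \<noteq> y"
          using that unfolding C_def by auto
        then show ?thesis
          using less.prems(2) v \<open>E x y\<close> unfolding P3_free_def by blast
      qed (use \<open>E x y\<close> in simp)
      with that show False
        unfolding C_def by blast
    qed
    then have "colourable (C \<union> (X - C)) E k"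
      using colourable_Un_anticomplete[OF col_C col_rest less.prems(4)] by blast
    moreover have "C \<union> (X - C) = X"
      using C_X by blast
    ultimately show ?thesis by simp
  qed (simp add: colourable_empty)
qed

definition no_stable_triple :: "'a set \<Rightarrow> ('a \<Rightarrow> 'a \<Rightarrow> bool) \<Rightarrow> bool" where
  "no_stable_triple X E \<longleftrightarrow>
     (\<forall>x\<in>X. \<forall>y\<in>X. \<forall>z\<in>X. x \<noteq> y \<longrightarrow> x \<noteq> z \<longrightarrow> y \<noteq> z \<longrightarrow> E x y \<or> E x z \<or> E y z)"

lemma no_stable_triple_subset: "no_stable_triple X E \<Longrightarrow> Y \<subseteq> X \<Longrightarrow> no_stable_triple Y E"
  unfolding no_stable_triple_def by blast

lemma no_stable_tripleD:
  assumes "no_stable_triple X E" "x \<in> X" "y \<in> X" "z \<in> X" "x \<noteq> y" "x \<noteq> z" "y \<noteq> z"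
    and "\<not> E x y" "\<not> E x z"
  shows "E y z"
  using assms unfolding no_stable_triple_def by blast

lemma card_le_if_no_stable_triple:
  assumes "finite S" "symp E" "irreflp E" "no_stable_triple S E" "clique_bounded S E k"
  shows "2 * card S \<le> k * (k + 3)"
  using assms
proof (induction k arbitrary: S)
  case 0
  have "S = {}"
  proof (rule ccontr)
    assume "S \<noteq> {}"
    then obtain x where "x \<in> S" by blast
    then have "clique S E {x}"
      unfolding clique_def by simp
    then have "card {x} \<le> 0"
      using "0.prems"(5) unfolding clique_bounded_def by blast
    then show False by simp
  qed
  then show ?case by simp
next
  case (Suc k)
  show ?case
  proof (cases "S = {}")
    case False
    then obtain x where x: "x \<in> S" by blast
    define A where "A = {y\<in>S. E x y}"
    define B where "B = {y\<in>S. y \<noteq> x \<and> \<not> E x y}"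
    have "S = insert x (A \<union> B)"
      using x unfolding A_def B_def by auto
    then have "card S \<le> Suc (card (A \<union> B))"
      using Suc.prems(1) by (simp add: card_insert_if)
    also have "\<dots> \<le> Suc (card A + card B)"
      using card_Un_le[of A B] by simp
    finally have card_S: "card S \<le> Suc (card A + card B)" .
    have "E y z" if "y \<in> B" "z \<in> B" "y \<noteq> z" for y z
      using no_stable_tripleD[OF Suc.prems(4) x] that unfolding B_def by auto
    then have "clique S E B"
      unfolding clique_def B_def by blast
    then have card_B: "card B \<le> Suc k"
      using Suc.prems(5) unfolding clique_bounded_def by blast
    have "clique_bounded A E k"
      using clique_bounded_neighbourhood[OF Suc.prems(5,1) x _ Suc.prems(2,3)]
      unfolding A_def by simp
    moreover have "finite A" "no_stable_triple A E"
      using Suc.prems(1) no_stable_triple_subset[OF Suc.prems(4)] unfolding A_def by auto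
    ultimately have "2 * card A \<le> k * (k + 3)"
      using Suc.IH Suc.prems(2,3) by blast
    then show ?thesis
      using card_S card_B by (simp add: algebra_simps)
  qed simp
qed

lemma card_neighbourhood_less_square:
  assumes "finite X" "c \<in> X" "clique_bounded X E w" "symp E" "irreflp E"
    and "no_stable_triple {u\<in>X. E c u} E"
  shows "card {u\<in>X. E c u} < w^2"
proof -
  have "clique X E {c}"
    using assms(2) unfolding clique_def by simp
  then have "card {c} \<le> w"
    using assms(3) unfolding clique_bounded_def by blast
  then obtain m where m: "w = Suc m"
    using Suc_le_D by auto
  have "clique_bounded {u\<in>X. E c u} E m"
    using clique_bounded_neighbourhood[OF assms(3,1,2) _ assms(4,5)] m by simp
  moreover have "finite {u\<in>X. E c u}"
    using assms(1) by simp
  ultimately have "2 * card {u\<in>X. E c u} \<le> m * (m + 3)"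
    using card_le_if_no_stable_triple assms(4,5,6) by blast
  then show ?thesis
    unfolding m by (simp add: power2_eq_square algebra_simps)
qed

lemma has_induced_listI:
  assumes "distinct xs" "set xs \<subseteq> V"
    and "\<forall>i<length xs. \<forall>j<length xs. E (xs ! i) (xs ! j) \<longleftrightarrow> F i j"
  shows "has_induced V E (length xs) F"
  unfolding has_induced_def
proof (intro exI conjI)
  show "inj_on (nth xs) {0..<length xs}"
    using assms(1) by (simp add: inj_on_def nth_eq_iff_index_eq)
  show "nth xs ` {0..<length xs} \<subseteq> V"
    using assms(2) by (auto dest: nth_mem)
  show "\<forall>i\<in>{0..<length xs}. \<forall>j\<in>{0..<length xs}. E (xs ! i) (xs ! j) \<longleftrightarrow> F i j"
    using assms(3) by simp
qed

locale fork_dart_free =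
  fixes V :: "'a set" and E :: "'a \<Rightarrow> 'a \<Rightarrow> bool"
  assumes simple: "simple_graph V E"
    and fork_free: "\<not> has_induced V E 5 fork_edge"
    and dart_free: "\<not> has_induced V E 5 dart_edge"
begin

lemma finite_V: "finite V"
  using simple unfolding simple_graph_def by blast

lemma adj_commute: "E x y \<longleftrightarrow> E y x"
  using simple unfolding simple_graph_def by blast

lemma adj_sym: "E x y \<Longrightarrow> E y x"
  using simple unfolding simple_graph_def by blast

lemma no_loop: "\<not> E x x"
  using simple unfolding simple_graph_def by blast

lemma adj_in_V: "E x y \<Longrightarrow> x \<in> V"
  using simple unfolding simple_graph_def by blast

lemma symp_E: "symp E"
  using adj_sym by (rule sympI)

lemma irreflp_E: "irreflp E"
  using no_loop by (rule irreflpI)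

text \<open>The fork with centre c, leaves a and b, and the path c, m, e.\<close>

lemma no_fork:
  assumes "E c a" "E c b" "E c m" "E m e"
    and "\<not> E a b" "\<not> E a m" "\<not> E a e" "\<not> E b m" "\<not> E b e" "\<not> E c e" "a \<noteq> b"
  shows False
proof -
  have "has_induced V E (length [c, a, b, e, m]) fork_edge"
  proof (rule has_induced_listI)
    show "distinct [c, a, b, e, m]"
      using assms no_loop adj_commute by auto
    show "set [c, a, b, e, m] \<subseteq> V"
      using assms adj_in_V adj_commute by auto
    show "\<forall>i<length [c, a, b, e, m]. \<forall>j<length [c, a, b, e, m].
        E ([c, a, b, e, m] ! i) ([c, a, b, e, m] ! j) \<longleftrightarrow> fork_edge i j"
      using assms by (simp add: All_less_Suc numeral_eq_Suc fork_edge_def doubleton_eq_iff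
          adj_commute no_loop)
  qed
  then show False
    using fork_free by (simp add: eval_nat_numeral)
qed

text \<open>The dart with centre c, the pendant vertex v, and the vertex t adjacent to c, l and r.\<close>

lemma no_dart:
  assumes "E c v" "E c l" "E c r" "E t c" "E t l" "E t r"
    and "\<not> E v l" "\<not> E v r" "\<not> E l r" "\<not> E t v" "l \<noteq> r"
  shows False
proof -
  have "has_induced V E (length [c, v, l, r, t]) dart_edge"
  proof (rule has_induced_listI)
    show "distinct [c, v, l, r, t]"
      using assms no_loop adj_commute by auto
    show "set [c, v, l, r, t] \<subseteq> V"
      using assms adj_in_V adj_commute by auto
    show "\<forall>i<length [c, v, l, r, t]. \<forall>j<length [c, v, l, r, t].
        E ([c, v, l, r, t] ! i) ([c, v, l, r, t] ! j) \<longleftrightarrow> dart_edge i j"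
      using assms by (simp add: All_less_Suc numeral_eq_Suc dart_edge_def doubleton_eq_iff
          adj_commute no_loop)
  qed
  then show False
    using dart_free by (simp add: eval_nat_numeral)
qed

lemma P3_free_dart:
  assumes "E a b"
  shows "P3_free {x. E a x \<and> \<not> E x b} E"
  unfolding P3_free_def
proof (intro ballI impI)
  fix x y z assume xyz: "x \<in> {x. E a x \<and> \<not> E x b}" "y \<in> {x. E a x \<and> \<not> E x b}"
    "z \<in> {x. E a x \<and> \<not> E x b}" "E x y" "E y z" "x \<noteq> z"
  show "E x z"
  proof (rule ccontr)
    assume "\<not> E x z"
    then show False
      using xyz assms by - (rule no_dart[of a b x z y], simp_all add: adj_commute)
  qed
qed

lemma colourable_P3_free_neighbourhood:
  assumes "clique_bounded X E w" "X \<subseteq> V" "v \<in> X" "E v b"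
    and "Y \<subseteq> {x\<in>X. E v x \<and> \<not> E x b}"
  shows "colourable Y E (w - 1)"
proof (rule colourable_P3_free)
  have "finite X"
    using assms(2) finite_V by (rule finite_subset)
  moreover have "Y \<subseteq> X"
    using assms(5) by blast
  ultimately show "finite Y"
    using finite_subset by blast
  show "P3_free Y E"
    by (rule P3_free_subset[OF P3_free_dart[OF assms(4)]]) (use assms(5) in blast)
  show "clique_bounded Y E (w - 1)"
    by (rule clique_bounded_neighbourhood[OF assms(1) \<open>finite X\<close> assms(3) _ symp_E irreflp_E])
      (use assms(5) in blast)
qed (fact symp_E irreflp_E)+

lemma adjacent_to_two_of_stable_triple:
  assumes "E c a1" "E c a2" "E c a3"
    and "\<not> E a1 a2" "\<not> E a1 a3" "\<not> E a2 a3" "a1 \<noteq> a2" "a1 \<noteq> a3" "a2 \<noteq> a3"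
    and "\<not> E c y" "E c u" "E y u"
  shows "(E y a1 \<and> E y a2) \<or> (E y a1 \<and> E y a3) \<or> (E y a2 \<and> E y a3)"
proof (cases "E y a1 \<or> E y a2 \<or> E y a3")
  case True
  have "E y a2 \<or> E y a3" if "E y a1"
  proof (rule ccontr)
    assume "\<not> ?thesis"
    with that assms show False
      by - (rule no_fork[of c a2 a3 a1 y], simp_all add: adj_commute)
  qed
  moreover have "E y a1 \<or> E y a3" if "E y a2"
  proof (rule ccontr)
    assume "\<not> ?thesis"
    with that assms show False
      by - (rule no_fork[of c a1 a3 a2 y], simp_all add: adj_commute)
  qed
  moreover have "E y a1 \<or> E y a2" if "E y a3"
  proof (rule ccontr)
    assume "\<not> ?thesis"
    with that assms show False
      by - (rule no_fork[of c a1 a2 a3 y], simp_all add: adj_commute)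
  qed
  ultimately show ?thesis
    using True by blast
next
  case False
  text \<open>Now u sees at most one of a1, a2, a3 (else a dart) and at least two (else a fork).\<close>
  have pair: "E c a" "E c a'" "\<not> E a a'" "\<not> E y a" "\<not> E y a'"
    if "a \<in> {a1, a2, a3}" "a' \<in> {a1, a2, a3}" "a \<noteq> a'" for a a'
    using that assms(1-6) False adj_commute by auto
  have "\<not> (E u a \<and> E u a')" if "a \<in> {a1, a2, a3}" "a' \<in> {a1, a2, a3}" "a \<noteq> a'" for a a'
  proof
    assume "E u a \<and> E u a'"
    with pair[OF that] that(3) assms(10-12) show False
      by - (rule no_dart[of u y a a' c], simp_all add: adj_commute)
  qed
  moreover have "E u a \<or> E u a'" if "a \<in> {a1, a2, a3}" "a' \<in> {a1, a2, a3}" "a \<noteq> a'" for a a'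
  proof (rule ccontr)
    assume "\<not> ?thesis"
    with pair[OF that] that(3) assms(10-12) show False
      by - (rule no_fork[of c a a' u y], simp_all add: adj_commute)
  qed
  ultimately have False
    using assms(7-9) by (metis insertI1 insertI2)
  then show ?thesis ..
qed

end

locale stable_triple_in_neighbourhood = fork_dart_free +
  fixes X :: "'a set" and c a1 a2 a3 :: 'a
  assumes X_subset: "X \<subseteq> V" and c_in_X: "c \<in> X"
    and triple_in_X: "a1 \<in> X" "a2 \<in> X" "a3 \<in> X"
    and c_adj_triple: "E c a1" "E c a2" "E c a3"
    and triple_stable: "\<not> E a1 a2" "\<not> E a1 a3" "\<not> E a2 a3"
    and triple_distinct: "a1 \<noteq> a2" "a1 \<noteq> a3" "a2 \<noteq> a3"
begin

text \<open>The distance layers of c within X: N1, N2, N3 at distance 1, 2, 3, far at distance at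
  least 3 and N4 at distance at least 4.\<close>

definition N1 :: "'a set" where
  "N1 = {u\<in>X. E c u}"

definition N2 :: "'a set" where
  "N2 = {y\<in>X. y \<noteq> c \<and> \<not> E c y \<and> (\<exists>u\<in>N1. E y u)}"

definition far :: "'a set" where
  "far = {z\<in>X. z \<noteq> c \<and> \<not> E c z \<and> (\<forall>u\<in>N1. \<not> E z u)}"

definition N3 :: "'a set" where
  "N3 = {z\<in>far. \<exists>y\<in>N2. E z y}"

definition N4 :: "'a set" where
  "N4 = {z\<in>far. \<forall>y\<in>N2. \<not> E z y}"

lemma finite_X: "finite X"
  using X_subset finite_V by (rule finite_subset)

lemma layers: "X = insert c (N1 \<union> N2 \<union> N3 \<union> N4)"
  using c_in_X unfolding N1_def N2_def far_def N3_def N4_def by auto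

lemma triple_nonadjacent: "a \<in> {a1, a2, a3} \<Longrightarrow> a' \<in> {a1, a2, a3} \<Longrightarrow> \<not> E a a'"
  using triple_stable no_loop adj_commute by auto

lemma triple_in_N1: "a \<in> {a1, a2, a3} \<Longrightarrow> a \<in> N1"
  using triple_in_X c_adj_triple unfolding N1_def by auto

lemma far_nonadjacent_N1: "z \<in> far \<Longrightarrow> x \<in> insert c N1 \<Longrightarrow> \<not> E z x"
  unfolding far_def using adj_commute by auto

lemma N2_adjacent_two:
  assumes "y \<in> N2"
  obtains a a' where "a \<in> {a1, a2, a3}" "a' \<in> {a1, a2, a3}" "a \<noteq> a'" "E y a" "E y a'"
proof -
  obtain u where "u \<in> N1" "E y u" "\<not> E c y"
    using assms unfolding N2_def by blast
  then have "(E y a1 \<and> E y a2) \<or> (E y a1 \<and> E y a3) \<or> (E y a2 \<and> E y a3)"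
    using adjacent_to_two_of_stable_triple[OF c_adj_triple triple_stable triple_distinct]
    unfolding N1_def by blast
  then show ?thesis
    using that triple_distinct by blast
qed

text \<open>A fork centred at y, with two of a1, a2, a3 as leaves.\<close>

lemma N2_far_path:
  assumes "y \<in> N2" "z \<in> far" "x \<in> far" "E y z" "E z x"
  shows "E y x"
proof (rule ccontr)
  assume "\<not> E y x"
  obtain a a' where a: "a \<in> {a1, a2, a3}" "a' \<in> {a1, a2, a3}" "a \<noteq> a'" "E y a" "E y a'"
    using N2_adjacent_two[OF assms(1)] .
  have "\<not> E z a" "\<not> E z a'" "\<not> E x a" "\<not> E x a'"
    using a(1,2) triple_in_N1 far_nonadjacent_N1 assms(2,3) by blast+
  with a \<open>\<not> E y x\<close> assms(4,5) triple_nonadjacent[OF a(1,2)] show False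
    by - (rule no_fork[of y a a' z x], simp_all add: adj_commute)
qed

lemma N4_anticomplete:
  assumes "z \<in> N4" "x \<in> X - N4"
  shows "\<not> E z x"
proof
  assume zx: "E z x"
  have z: "z \<in> far" "\<forall>y\<in>N2. \<not> E z y"
    using assms(1) unfolding N4_def by auto
  have "x \<in> insert c N1 \<or> x \<in> N2 \<or> x \<in> N3"
    using assms(2) layers by auto
  then show False
  proof (elim disjE)
    assume "x \<in> insert c N1"
    then show False
      using far_nonadjacent_N1 z(1) zx by blast
  next
    assume "x \<in> N2"
    then show False
      using z(2) zx by blast
  next
    assume "x \<in> N3"
    then obtain y where "y \<in> N2" "E x y" "x \<in> far"
      unfolding N3_def by blast
    then have "E y z"
      using N2_far_path[OF \<open>y \<in> N2\<close> \<open>x \<in> far\<close> z(1)] zx adj_sym by blast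
    then show False
      using z(2) \<open>y \<in> N2\<close> adj_sym by blast
  qed
qed

lemma N2_not_far: "y \<in> N2 \<Longrightarrow> y \<notin> far"
  unfolding N2_def far_def by blast

lemma P3_free_N3: "P3_free N3 E"
  unfolding P3_free_def
proof (intro ballI impI)
  fix x y z assume xyz: "x \<in> N3" "y \<in> N3" "z \<in> N3" "E x y" "E y z" "x \<noteq> z"
  show "E x z"
  proof (rule ccontr)
    assume "\<not> E x z"
    obtain u where u: "u \<in> N2" "E y u"
      using xyz(2) unfolding N3_def by blast
    have far: "x \<in> far" "y \<in> far" "z \<in> far"
      using xyz(1-3) unfolding N3_def by auto
    have "E u x" "E u z"
      using N2_far_path[OF u(1) far(2)] far(1,3) xyz(4,5) u(2) adj_sym by blast+
    obtain a where a: "a \<in> {a1, a2, a3}" "E u a"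
      using N2_adjacent_two[OF u(1)] by blast
    have "\<not> E x a" "\<not> E z a" "\<not> E x c" "\<not> E z c"
      using far triple_in_N1[OF a(1)] far_nonadjacent_N1 by blast+
    moreover have "\<not> E u c" "E a c"
      using u(1) a(1) c_adj_triple adj_commute unfolding N2_def by auto
    ultimately show False
      using \<open>E u x\<close> \<open>E u z\<close> \<open>\<not> E x z\<close> xyz(6) a(2)
      by - (rule no_fork[of u x z a c], simp_all add: adj_commute)
  qed
qed

lemma N3_clique_common_neighbour:
  assumes "clique N3 E K" "K \<noteq> {}"
  shows "\<exists>u\<in>X - K. \<forall>x\<in>K. E u x"
proof -
  obtain z where z: "z \<in> K" "z \<in> N3"
    using assms unfolding clique_def by blast
  then obtain u where u: "u \<in> N2" "E z u"
    unfolding N3_def by blast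
  have "E u x" if "x \<in> K" for x
  proof (cases "x = z")
    case False
    then have "E z x" "x \<in> far" "z \<in> far"
      using assms(1) that z unfolding clique_def N3_def by auto
    then show ?thesis
      using N2_far_path[OF u(1)] u(2) adj_sym by blast
  qed (use u(2) adj_sym in blast)
  moreover have "u \<in> X - K"
    using u(1) N2_not_far assms(1) unfolding clique_def N3_def N2_def by auto
  ultimately show ?thesis by blast
qed

context
  fixes w :: nat
  assumes clique_bounded_X: "clique_bounded X E w"
begin

lemma two_le_clique_bound: "2 \<le> w"
proof -
  have "clique X E {c, a1}"
    using c_in_X triple_in_X(1) c_adj_triple(1) adj_sym unfolding clique_def by auto
  then have "card {c, a1} \<le> w"
    using clique_bounded_X unfolding clique_bounded_def by blast
  moreover have "c \<noteq> a1"
    using c_adj_triple no_loop by auto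
  ultimately show ?thesis by simp
qed

lemma clique_bounded_N1_a1: "clique_bounded {u\<in>N1. E u a1} E (w - 2)"
  unfolding clique_bounded_def
proof (intro allI impI)
  fix K assume K: "clique {u\<in>N1. E u a1} E K"
  have K_sub: "K \<subseteq> X" "\<forall>x\<in>K. E c x" "\<forall>x\<in>K. E a1 x"
    using K adj_sym unfolding clique_def N1_def by auto
  have "clique X E K"
    using K K_sub(1) unfolding clique_def by blast
  then have "clique X E (insert a1 K)"
    by (rule clique_insert[OF _ triple_in_X(1) K_sub(3) symp_E])
  then have "clique X E (insert c (insert a1 K))"
    by (rule clique_insert[OF _ c_in_X _ symp_E]) (use K_sub(2) c_adj_triple(1) in simp)
  then have "card (insert c (insert a1 K)) \<le> w"
    using clique_bounded_X unfolding clique_bounded_def by blast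
  moreover have "finite K"
    using K_sub(1) finite_X by (rule finite_subset)
  moreover have "a1 \<notin> K" "c \<notin> K" "c \<noteq> a1"
    using K_sub(2,3) c_adj_triple(1) no_loop by auto
  ultimately show "card K \<le> w - 2" by simp
qed

lemma colourable_N1_not_a1_N3: "colourable ({u\<in>N1. \<not> E u a1} \<union> N3) E (w - 1)"
proof (rule colourable_Un_anticomplete[OF _ _ symp_E])
  show "colourable {u\<in>N1. \<not> E u a1} E (w - 1)"
    by (rule colourable_P3_free_neighbourhood[OF clique_bounded_X X_subset c_in_X c_adj_triple(1)])
      (auto simp: N1_def)
  have "N3 \<subseteq> X"
    unfolding N3_def far_def by auto
  then have "finite N3"
    using finite_X finite_subset by blast
  moreover have "clique_bounded N3 E (w - 1)"
    by (rule clique_bounded_common_neighbour[OF clique_bounded_X finite_X \<open>N3 \<subseteq> X\<close> symp_E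
          N3_clique_common_neighbour])
  ultimately show "colourable N3 E (w - 1)"
    using colourable_P3_free P3_free_N3 symp_E irreflp_E by blast
  show "\<forall>x\<in>{u\<in>N1. \<not> E u a1}. \<forall>y\<in>N3. \<not> E x y"
  proof (intro ballI)
    fix x y assume "x \<in> {u\<in>N1. \<not> E u a1}" "y \<in> N3"
    then have "\<not> E y x"
      using far_nonadjacent_N1 unfolding N3_def by blast
    then show "\<not> E x y"
      using adj_sym by blast
  qed
qed

lemma colourable_c_N2_a1: "colourable (insert c {y\<in>N2. E y a1}) E (w - 1)"
proof -
  have "colourable {c} E (w - 1)"
    using colourable_card[OF _ _ irreflp_E, of "{c}" "w - 1"] two_le_clique_bound by simp
  moreover have "colourable {y\<in>N2. E y a1} E (w - 1)"
    by (rule colourable_P3_free_neighbourhood[OF clique_bounded_X X_subset triple_in_X(1)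
          adj_sym[OF c_adj_triple(1)]])
      (auto simp: N2_def intro: adj_sym)
  moreover have "\<forall>x\<in>{c}. \<forall>y\<in>{y\<in>N2. E y a1}. \<not> E x y"
    unfolding N2_def by blast
  ultimately have "colourable ({c} \<union> {y\<in>N2. E y a1}) E (w - 1)"
    by (rule colourable_Un_anticomplete[OF _ _ symp_E])
  then show ?thesis
    by simp
qed

lemma colourable_N2_not_a1: "colourable {y\<in>N2. \<not> E y a1} E (w - 1)"
proof (rule colourable_P3_free_neighbourhood[OF clique_bounded_X X_subset triple_in_X(2)
      adj_sym[OF c_adj_triple(2)]])
  have "E a2 y" if y: "y \<in> N2" "\<not> E y a1" for y
  proof -
    obtain a a' where "a \<in> {a1, a2, a3}" "a' \<in> {a1, a2, a3}" "a \<noteq> a'" "E y a" "E y a'"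
      using N2_adjacent_two[OF y(1)] .
    then have "E y a2"
      using y(2) by auto
    then show ?thesis
      by (rule adj_sym)
  qed
  moreover have "\<not> E y c" if "y \<in> N2" for y
    using that adj_sym unfolding N2_def by blast
  ultimately show "{y\<in>N2. \<not> E y a1} \<subseteq> {x\<in>X. E a2 x \<and> \<not> E x c}"
    unfolding N2_def by blast
qed

lemma colourable_square_from_smaller:
  assumes IH: "\<And>Y w'. Y \<subset> X \<Longrightarrow> clique_bounded Y E w' \<Longrightarrow> colourable Y E (w'^2)"
  shows "colourable X E (w^2)"
proof (cases "N4 = {}")
  case False
  have "N4 \<subset> X"
    using c_in_X unfolding N4_def far_def by auto
  then have "colourable N4 E (w^2)"
    using IH clique_bounded_subset[OF clique_bounded_X] by blast
  moreover have "X - N4 \<subset> X"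
    using False unfolding N4_def far_def by auto
  then have "colourable (X - N4) E (w^2)"
    using IH clique_bounded_subset[OF clique_bounded_X] by blast
  ultimately have "colourable (N4 \<union> (X - N4)) E (w^2)"
    using colourable_Un_anticomplete[OF _ _ symp_E] N4_anticomplete by blast
  moreover have "N4 \<union> (X - N4) = X"
    unfolding N4_def far_def by auto
  ultimately show ?thesis by simp
next
  case True
  have "{u\<in>N1. E u a1} \<subset> X"
    using c_in_X no_loop unfolding N1_def by auto
  then have "colourable {u\<in>N1. E u a1} E ((w - 2)^2)"
    using IH clique_bounded_N1_a1 by blast
  then have "colourable ({u\<in>N1. E u a1} \<union> ({u\<in>N1. \<not> E u a1} \<union> N3) \<union>
      insert c {y\<in>N2. E y a1} \<union> {y\<in>N2. \<not> E y a1}) E ((w - 2)^2 + (w - 1) + (w - 1) + (w - 1))"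
    using colourable_Un[OF colourable_Un[OF colourable_Un[OF _ colourable_N1_not_a1_N3]
          colourable_c_N2_a1] colourable_N2_not_a1] by blast
  moreover have "{u\<in>N1. E u a1} \<union> ({u\<in>N1. \<not> E u a1} \<union> N3) \<union>
      insert c {y\<in>N2. E y a1} \<union> {y\<in>N2. \<not> E y a1} = X"
    using layers True by blast
  ultimately have "colourable X E ((w - 2)^2 + (w - 1) + (w - 1) + (w - 1))"
    by simp
  moreover have "(w - 2)^2 + (w - 1) + (w - 1) + (w - 1) \<le> w^2"
  proof -
    obtain m where "w = m + 2"
      using two_le_clique_bound le_Suc_ex by (metis add.commute)
    then show ?thesis
      by (simp add: power2_eq_square algebra_simps)
  qed
  ultimately show ?thesis
    by (rule colourable_mono)
qed

end

end

context fork_dart_free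
begin

theorem colourable_clique_bound_square:
  assumes "X \<subseteq> V" "clique_bounded X E w"
  shows "colourable X E (w^2)"
  using assms
proof (induction "card X" arbitrary: X w rule: less_induct)
  case less
  have finite: "finite X"
    using less.prems(1) finite_V by (rule finite_subset)
  have IH: "colourable Y E (w'^2)" if "Y \<subset> X" "clique_bounded Y E w'" for Y w'
    using less.hyps[OF psubset_card_mono[OF finite that(1)]] that less.prems(1) by blast
  show ?case
  proof (cases "X = {}")
    case False
    then obtain c where c: "c \<in> X" by blast
    show ?thesis
    proof (cases "no_stable_triple {u\<in>X. E c u} E")
      case True
      have "card {u\<in>X. E c u} < w^2"
        by (rule card_neighbourhood_less_square[OF finite c less.prems(2) symp_E irreflp_E True])
      moreover have "X - {c} \<subset> X"
        using c by blast
      then have "colourable (X - {c}) E (w^2)"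
        using IH clique_bounded_subset[OF less.prems(2)] by blast
      ultimately show ?thesis
        using colourable_insert_low_degree[OF finite c _ _ symp_E irreflp_E] by blast
    next
      case False
      then obtain a1 a2 a3 where a: "a1 \<in> X" "a2 \<in> X" "a3 \<in> X" "E c a1" "E c a2" "E c a3"
        "a1 \<noteq> a2" "a1 \<noteq> a3" "a2 \<noteq> a3" "\<not> E a1 a2" "\<not> E a1 a3" "\<not> E a2 a3"
        unfolding no_stable_triple_def by auto
      interpret stable_triple_in_neighbourhood V E X c a1 a2 a3
        by unfold_locales (fact less.prems(1) c a)+
      show ?thesis
        by (rule colourable_square_from_smaller[OF less.prems(2) IH])
    qed
  qed (simp add: colourable_empty)
qed

end

theorem corollary3p7:
  fixes V :: "'a set" and E :: "'a \<Rightarrow> 'a \<Rightarrow> bool"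
  assumes "simple_graph V E"
    and "\<not> has_induced V E 5 fork_edge"
    and "\<not> has_induced V E 5 dart_edge"
  shows "chromatic_number V E \<le> (clique_number V E) ^ 2"
proof -
  interpret fork_dart_free V E
    using assms by unfold_locales
  have "clique_bounded V E (clique_number V E)"
    using finite_V by (rule clique_bounded_clique_number)
  then have "colourable V E ((clique_number V E)^2)"
    by (rule colourable_clique_bound_square[OF subset_refl])
  then show ?thesis
    by (rule chromatic_number_le)
qed

end
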